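(* Let $g$ be a symplectic potential, $y=\partial g/\partial x$, $h=x\cdot y-g$, $X_g=-\sum_jy_j\partial_{\theta_j}$, and let $\hat g=i\nabla_{X_g}+g$ be its prequantum operator, acting on sections $f\mathbbm 1$ over $\check X_P$ by $\hat g(f\mathbbm1)=(iX_gf-hf)\mathbbm 1$; set $e^{\hat g}:=\sum_k\frac1{k!}\hat g^k$. Let $\Theta=d\theta_1\wedge\cdots\wedge d\theta_n$ and let $e^{i\mathcal L_{X_g}}$ act on half-forms by $e^{i\mathcal L_{X_g}}\sqrt{d\Theta}:=\sqrt{dZ}$. Let $\mathcal A_P=\operatorname{span}_{\mathbb C}\{e^{im\cdot\theta}:m\in P\cap\mathbb Z^n\}$ and $\mathcal H_{\mathcal P_g}=\operatorname{span}_{\mathbb C}\{\sigma^m:m\in P\cap\mathbb Z^n\}$, where $\sigma^m=w^me^{-h}\mathbbm1\otimes\sqrt{dZ}$. Then $e^{\hat g}\otimes e^{i\mathcal L_{X_g}}:\mathcal A_P\,\mathbbm 1\otimes\sqrt{d\Theta}\to\mathcal H_{\mathcal P_g}$ is an isomorphism, sending $e^{im\cdot\theta}\mathbbm1\otimes\sqrt{d\Theta}$ to $\sigma^m$ for every $m\in P\cap\mathbb Z^n$.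
   Context: Let $P=\{x:\ell_j(x)=\langle\nu_j,x\rangle+\lambda_j\ge0,\ j=1,\dots,r\}$ be a Delzant polytope with $\lambda_j\in\frac12+\mathbb Z$ and interior $\check P$; $(X_P,\omega)$ the associated compact symplectic toric manifold, moment map $\mu$, toric divisors $D_j$, action-angle coordinates $(x,\theta)$ on $\check X_P=\mu^{-1}(\check P)$ with $\omega=\sum dx^j\wedge d\theta_j$. A symplectic potential is $g=\frac12\sum\ell_j\log\ell_j+\varphi$, $\varphi\in C^\infty(P)$, with positive definite Hessian on $\check P$ and $\det H_g=(\alpha\prod\ell_j)^{-1}$, $\alpha>0$ smooth on $P$; it gives a toric Kähler structure $I_g$ with holomorphic coordinates $z_j=y_j+i\theta_j$ on $\check X_P$, $w^m=e^{m\cdot(y+i\theta)}$, and $dZ=dz_1\wedge\cdots\wedge dz_n$ (the $I_g$-meromorphic section of $K_{X_P}$ with divisor $-(D_1+\cdots+D_r)$). $L$ is the half-form corrected prequantum line bundle ($c_1(L)=[\omega/2\pi]-c_1(X_P)/2$, connection of curvature $-i(\omega-\frac12\rho)$), whose sections over $\check X_P$ are written $f\,\mathbbm1\otimes\sqrt{\cdot}$ with $\mathbbm 1$ a unitary section of a prequantum factor satisfying $\nabla\mathbbm1=-i\sum x^jd\theta_j\,\mathbbm1$ and $\sqrt{\cdot}$ a multivalued half-form factor. The sections $\sigma^m$, $m\in P\cap\mathbb Z^n$, form a basis of $H^0(X_P,L)$, the Kähler quantization $\mathcal H_{\mathcal P_g}$; $e^{iX_g}f:=\sum_k\frac{i^k}{k!}X_g^kf$.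 *)

theory Defs
  imports "HOL-Analysis.Analysis"
begin

definition aff :: "(nat \<Rightarrow> real^'n) \<Rightarrow> (nat \<Rightarrow> real) \<Rightarrow> nat \<Rightarrow> real^'n \<Rightarrow> real" where
  "aff \<nu> lam j x = \<nu> j \<bullet> x + lam j"

definition polytope :: "nat \<Rightarrow> (nat \<Rightarrow> real^'n) \<Rightarrow> (nat \<Rightarrow> real) \<Rightarrow> (real^'n) set" where
  "polytope r \<nu> lam = {x. \<forall>j<r. aff \<nu> lam j x \<ge> 0}"

definition int_vec :: "real^'n \<Rightarrow> bool" where
  "int_vec v \<longleftrightarrow> (\<forall>i. v $ i \<in> \<int>)"

text \<open>Delzant polytope: compact with nonempty interior, each of the r inequalities cuts out a
  facet, and at every point the normals of the facets through that point are part of a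
  Z-basis of Z^n (equivalently: the polytope is simple, rational and smooth).\<close>

definition delzant :: "nat \<Rightarrow> (nat \<Rightarrow> real^'n) \<Rightarrow> (nat \<Rightarrow> real) \<Rightarrow> bool" where
  "delzant r \<nu> lam \<longleftrightarrow>
     bounded (polytope r \<nu> lam) \<and> interior (polytope r \<nu> lam) \<noteq> {} \<and>
     (\<forall>j<r. int_vec (\<nu> j)) \<and>
     (\<forall>j<r. \<exists>x\<in>polytope r \<nu> lam. aff \<nu> lam j x = 0 \<and> (\<forall>k<r. k \<noteq> j \<longrightarrow> aff \<nu> lam k x > 0)) \<and>
     (\<forall>v\<in>polytope r \<nu> lam. \<exists>B :: 'n \<Rightarrow> real^'n.
        (\<forall>i. int_vec (B i)) \<and> \<bar>det (\<chi> i. B i)\<bar> = 1 \<and>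
        inj_on \<nu> {j. j < r \<and> aff \<nu> lam j v = 0} \<and>
        (\<forall>j<r. aff \<nu> lam j v = 0 \<longrightarrow> \<nu> j \<in> range B))"

definition smooth_on :: "(real^'n) set \<Rightarrow> (real^'n \<Rightarrow> real) \<Rightarrow> bool" where
  "smooth_on U f \<longleftrightarrow> open U \<and> (\<exists>D :: 'n list \<Rightarrow> real^'n \<Rightarrow> real.
      (\<forall>x\<in>U. D [] x = f x) \<and>
      (\<forall>is i. \<forall>x\<in>U. ((\<lambda>t. D is (x + t *\<^sub>R axis i 1)) has_real_derivative D (i # is) x) (at 0)) \<and>
      (\<forall>is. continuous_on U (D is)))"

definition smooth_on_closed :: "(real^'n) set \<Rightarrow> (real^'n \<Rightarrow> real) \<Rightarrow> bool" where
  "smooth_on_closed S f \<longleftrightarrow> (\<exists>U F. S \<subseteq> U \<and> smooth_on U F \<and> (\<forall>x\<in>S. F x = f x))"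

definition pd :: "'n \<Rightarrow> (real^'n \<Rightarrow> real) \<Rightarrow> real^'n \<Rightarrow> real" where
  "pd i f x = deriv (\<lambda>t. f (x + t *\<^sub>R axis i 1)) 0"

definition hessian :: "(real^'n \<Rightarrow> real) \<Rightarrow> real^'n \<Rightarrow> real^'n^'n" where
  "hessian f x = (\<chi> i j. pd i (pd j f) x)"

definition symplectic_potential ::
  "nat \<Rightarrow> (nat \<Rightarrow> real^'n) \<Rightarrow> (nat \<Rightarrow> real) \<Rightarrow> (real^'n \<Rightarrow> real) \<Rightarrow> bool" where
  "symplectic_potential r \<nu> lam g \<longleftrightarrow>
     (\<exists>\<phi> \<alpha>. smooth_on_closed (polytope r \<nu> lam) \<phi> \<and> smooth_on_closed (polytope r \<nu> lam) \<alpha> \<and>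
        (\<forall>x\<in>polytope r \<nu> lam. \<alpha> x > 0) \<and>
        (\<forall>x\<in>interior (polytope r \<nu> lam).
            g x = (1/2) * (\<Sum>j<r. aff \<nu> lam j x * ln (aff \<nu> lam j x)) + \<phi> x \<and>
            (\<forall>v. v \<noteq> 0 \<longrightarrow> v \<bullet> (hessian g x *v v) > 0) \<and>
            det (hessian g x) = 1 / (\<alpha> x * (\<Prod>j<r. aff \<nu> lam j x))))"

text \<open>A point of the open dense orbit is a pair (x, theta) with x in the interior of P
  (theta taken in R^n, i.e. on the universal cover of the torus).
  Sections of L there are written f 1 (x) sqrt(.) and are represented by their coefficient
  functions f :: real^n x real^n => complex with respect to a fixed frame.\<close>

type_synonym 'n coef = "(real^'n) \<times> (real^'n) \<Rightarrow> complex"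

definition yvec :: "(real^'n \<Rightarrow> real) \<Rightarrow> real^'n \<Rightarrow> real^'n" where
  "yvec g x = (\<chi> j. pd j g x)"

definition hfun :: "(real^'n \<Rightarrow> real) \<Rightarrow> real^'n \<Rightarrow> real" where
  "hfun g x = x \<bullet> yvec g x - g x"

definition dtheta :: "'n::finite \<Rightarrow> 'n coef \<Rightarrow> 'n coef" where
  "dtheta j F p = vector_derivative (\<lambda>t. F (fst p, snd p + t *\<^sub>R axis j 1)) (at 0)"

definition Xg :: "(real^'n::finite \<Rightarrow> real) \<Rightarrow> 'n coef \<Rightarrow> 'n coef" where
  "Xg g F p = - (\<Sum>j\<in>UNIV. complex_of_real (yvec g (fst p) $ j) * dtheta j F p)"

definition ghat :: "(real^'n \<Rightarrow> real) \<Rightarrow> 'n coef \<Rightarrow> 'n coef" where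
  "ghat g F p = \<i> * Xg g F p - complex_of_real (hfun g (fst p)) * F p"

definition lattice_pts :: "nat \<Rightarrow> (nat \<Rightarrow> real^'n) \<Rightarrow> (nat \<Rightarrow> real) \<Rightarrow> (real^'n) set" where
  "lattice_pts r \<nu> lam = {m \<in> polytope r \<nu> lam. int_vec m}"

text \<open>e^{i m.theta} (coefficient w.r.t. 1 (x) sqrt(dTheta)), on the open orbit.\<close>
definition echar :: "nat \<Rightarrow> (nat \<Rightarrow> real^'n) \<Rightarrow> (nat \<Rightarrow> real) \<Rightarrow> real^'n \<Rightarrow> 'n coef" where
  "echar r \<nu> lam m p = (if fst p \<in> interior (polytope r \<nu> lam)
      then exp (\<i> * complex_of_real (m \<bullet> snd p)) else 0)"

text \<open>sigma^m = w^m e^{-h} 1 (x) sqrt(dZ), w^m = e^{m.(y + i theta)};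
  coefficient w.r.t. 1 (x) sqrt(dZ).\<close>
definition sigma :: "nat \<Rightarrow> (nat \<Rightarrow> real^'n) \<Rightarrow> (nat \<Rightarrow> real) \<Rightarrow> (real^'n \<Rightarrow> real) \<Rightarrow> real^'n \<Rightarrow> 'n coef" where
  "sigma r \<nu> lam g m p = (if fst p \<in> interior (polytope r \<nu> lam)
      then exp (complex_of_real (m \<bullet> yvec g (fst p)) + \<i> * complex_of_real (m \<bullet> snd p))
           * exp (- complex_of_real (hfun g (fst p)))
      else 0)"

definition cspan_fun :: "'a set \<Rightarrow> ('a \<Rightarrow> 'n coef) \<Rightarrow> 'n coef set" where
  "cspan_fun M e = {F. \<exists>c. F = (\<lambda>p. \<Sum>m\<in>M. c m * e m p)}"

text \<open>A_P (coefficients w.r.t. 1 (x) sqrt(dTheta)) and H_{P_g} (coefficients w.r.t. 1 (x) sqrt(dZ)).\<close>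
definition A_P :: "nat \<Rightarrow> (nat \<Rightarrow> real^'n::finite) \<Rightarrow> (nat \<Rightarrow> real) \<Rightarrow> 'n coef set" where "A_P r \<nu> lam = cspan_fun (lattice_pts r \<nu> lam) (echar r \<nu> lam)"
definition H_Pg :: "nat \<Rightarrow> (nat \<Rightarrow> real^'n::finite) \<Rightarrow> (nat \<Rightarrow> real) \<Rightarrow> (real^'n \<Rightarrow> real) \<Rightarrow> 'n coef set" where "H_Pg r \<nu> lam g = cspan_fun (lattice_pts r \<nu> lam) (sigma r \<nu> lam g)"

text \<open>e^{ghat} (x) e^{i L_{X_g}} on coefficient functions: since e^{i L_{X_g}} sqrt(dTheta) = sqrt(dZ),
  the coefficient f w.r.t. 1 (x) sqrt(dTheta) is sent to the coefficient sum_k ghat^k f / k!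
  w.r.t. 1 (x) sqrt(dZ).\<close>
definition exp_ghat :: "nat \<Rightarrow> (nat \<Rightarrow> real^'n) \<Rightarrow> (nat \<Rightarrow> real) \<Rightarrow> (real^'n \<Rightarrow> real) \<Rightarrow> 'n coef \<Rightarrow> 'n coef" where
  "exp_ghat r \<nu> lam g F p = (if fst p \<in> interior (polytope r \<nu> lam)
      then (\<Sum>k. (ghat g ^^ k) F p / of_nat (fact k)) else 0)"

end

theory Submission imports Defs begin

text \<open>On the open orbit the prequantum operator is diagonal in the characters
  e^{i m.theta}: since X_g = -y.d/dtheta, it multiplies the coefficient of e^{i m.theta}
  by the function m.y - h of x alone. Exponentiating, e^{ghat} multiplies it by
  e^{m.y - h}, which turns e^{i m.theta} into sigma^m. Bijectivity onto H_{P_g} then reduces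
  to the linear independence of the characters e^{i m.theta} for distinct frequencies m.\<close>

definition plane_wave :: "'a::real_inner \<Rightarrow> 'a \<Rightarrow> complex" where
  "plane_wave m \<theta> = exp (\<i> * complex_of_real (m \<bullet> \<theta>))"

definition ghat_eigenvalue :: "(real^'n \<Rightarrow> real) \<Rightarrow> real^'n \<Rightarrow> real^'n \<Rightarrow> complex" where
  "ghat_eigenvalue g m x = complex_of_real (m \<bullet> yvec g x - hfun g x)"

lemma plane_wave_add: "plane_wave m (\<theta> + s) = plane_wave m s * plane_wave m \<theta>"
  by (simp add: plane_wave_def inner_add_right distrib_left exp_add mult.commute)

lemma plane_wave_0 [simp]: "plane_wave m 0 = 1"
  by (simp add: plane_wave_def)

lemma plane_wave_separates:
  assumes "m0 \<noteq> m1"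
  obtains s where "plane_wave m0 s \<noteq> plane_wave m1 s"
proof
  define d where "d = m0 - m1"
  define s where "s = (pi / (d \<bullet> d)) *\<^sub>R d"
  have "d \<bullet> d > 0" using assms by (simp add: d_def)
  have "m0 \<bullet> s - m1 \<bullet> s = d \<bullet> s" by (simp add: d_def inner_diff_left)
  also have "\<dots> = pi" using \<open>d \<bullet> d > 0\<close> by (simp add: s_def)
  finally have "m0 \<bullet> s = m1 \<bullet> s + pi" by simp
  then have "plane_wave m0 s = - plane_wave m1 s"
    by (simp add: plane_wave_def distrib_left exp_add exp_pi_i')
  then show "plane_wave m0 s \<noteq> plane_wave m1 s" by (simp add: plane_wave_def)
qed

lemma plane_wave_sum_eq_0_imp_coeffs_eq_0:
  fixes M :: "'a::real_inner set"
  assumes "finite M" and "\<And>\<theta>. (\<Sum>m\<in>M. a m * plane_wave m \<theta>) = 0"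
  shows "\<forall>m\<in>M. a m = 0"
  using assms
proof (induction M arbitrary: a rule: finite_induct)
  case empty then show ?case by simp
next
  case (insert m1 M)
  have rest: "a m0 = 0" if "m0 \<in> M" for m0
  proof -
    from that insert.hyps have "m0 \<noteq> m1" by auto
    then obtain s where s: "plane_wave m0 s \<noteq> plane_wave m1 s" by (rule plane_wave_separates)
    \<comment> \<open>Translating by s and subtracting eliminates the frequency m1.\<close>
    define b where "b m = a m * (plane_wave m s - plane_wave m1 s)" for m
    have "(\<Sum>m\<in>insert m1 M. b m * plane_wave m \<theta>) =
        (\<Sum>m\<in>insert m1 M. a m * plane_wave m (\<theta> + s))
        - plane_wave m1 s * (\<Sum>m\<in>insert m1 M. a m * plane_wave m \<theta>)" for \<theta>
      by (simp add: b_def plane_wave_add sum_distrib_left sum_subtractf[symmetric] algebra_simps)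
    then have "(\<Sum>m\<in>M. b m * plane_wave m \<theta>) = 0" for \<theta>
      using insert.prems insert.hyps by (simp add: b_def)
    then have "b m0 = 0" using insert.IH that by blast
    with s show ?thesis by (simp add: b_def)
  qed
  have "(\<Sum>m\<in>insert m1 M. a m * plane_wave m 0) = 0" by (rule insert.prems)
  with insert.hyps rest have "a m1 = 0" by simp
  with rest show ?case by simp
qed

lemma plane_wave_has_vector_derivative_axis:
  "((\<lambda>t. plane_wave m (\<theta> + t *\<^sub>R axis j 1)) has_vector_derivative
      (\<i> * complex_of_real (m $ j)) * plane_wave m \<theta>) (at 0)"
proof -
  have "((\<lambda>z. exp (\<i> * complex_of_real (m \<bullet> \<theta>) + z * (\<i> * complex_of_real (m $ j))))
      has_field_derivative (\<i> * complex_of_real (m $ j)) * plane_wave m \<theta>) (at (of_real 0))"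
    by (auto intro!: derivative_eq_intros simp: plane_wave_def)
  from has_vector_derivative_real_field[OF this] show ?thesis
    by (simp add: plane_wave_def inner_add_right inner_axis algebra_simps)
qed

lemma dtheta_plane_wave_sum:
  "dtheta j (\<lambda>p. \<Sum>m\<in>M. c m (fst p) * plane_wave m (snd p)) p
     = (\<Sum>m\<in>M. c m (fst p) * (\<i> * complex_of_real (m $ j)) * plane_wave m (snd p))"
proof -
  have "((\<lambda>t. \<Sum>m\<in>M. c m (fst p) * plane_wave m (snd p + t *\<^sub>R axis j 1)) has_vector_derivative
      (\<Sum>m\<in>M. c m (fst p) * (\<i> * complex_of_real (m $ j)) * plane_wave m (snd p))) (at 0)"
    using plane_wave_has_vector_derivative_axis
    by (auto intro!: has_vector_derivative_sum has_vector_derivative_mult_right simp: mult.assoc)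
  then show ?thesis by (simp add: dtheta_def vector_derivative_at)
qed

lemma ghat_plane_wave_sum:
  fixes c :: "real^'n::finite \<Rightarrow> real^'n \<Rightarrow> complex"
  shows "ghat g (\<lambda>p. \<Sum>m\<in>M. c m (fst p) * plane_wave m (snd p))
     = (\<lambda>p. \<Sum>m\<in>M. c m (fst p) * ghat_eigenvalue g m (fst p) * plane_wave m (snd p))"
proof
  fix p :: "(real^'n) \<times> (real^'n)"
  define y where "y = yvec g (fst p)"
  have "Xg g (\<lambda>p. \<Sum>m\<in>M. c m (fst p) * plane_wave m (snd p)) p
      = - (\<Sum>m\<in>M. \<Sum>j\<in>UNIV. complex_of_real (y $ j) *
             (c m (fst p) * (\<i> * complex_of_real (m $ j)) * plane_wave m (snd p)))"
    by (simp add: Xg_def dtheta_plane_wave_sum sum_distrib_left y_def sum.swap[of _ UNIV M])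
  also have "\<dots> = - (\<Sum>m\<in>M. \<i> * c m (fst p) * complex_of_real (m \<bullet> y) * plane_wave m (snd p))"
    by (simp add: inner_vec_def sum_distrib_left algebra_simps)
  finally show "ghat g (\<lambda>p. \<Sum>m\<in>M. c m (fst p) * plane_wave m (snd p)) p
      = (\<Sum>m\<in>M. c m (fst p) * ghat_eigenvalue g m (fst p) * plane_wave m (snd p))"
    by (simp add: ghat_def ghat_eigenvalue_def y_def sum_distrib_left sum_subtractf[symmetric]
        sum_negf[symmetric] algebra_simps)
qed

lemma ghat_power_plane_wave_sum:
  "(ghat g ^^ k) (\<lambda>p. \<Sum>m\<in>M. c m (fst p) * plane_wave m (snd p))
     = (\<lambda>p. \<Sum>m\<in>M. c m (fst p) * ghat_eigenvalue g m (fst p) ^ k * plane_wave m (snd p))"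
proof (induction k)
  case 0 then show ?case by simp
next
  case (Suc k)
  then show ?case
    using ghat_plane_wave_sum[where c="\<lambda>m x. c m x * ghat_eigenvalue g m x ^ k"]
    by (simp add: algebra_simps)
qed

lemma exp_ghat_series_plane_wave_sum:
  "(\<lambda>k. (ghat g ^^ k) (\<lambda>p. \<Sum>m\<in>M. c m (fst p) * plane_wave m (snd p)) p / of_nat (fact k))
     sums (\<Sum>m\<in>M. c m (fst p) * exp (ghat_eigenvalue g m (fst p)) * plane_wave m (snd p))"
proof -
  have "(\<lambda>k. ghat_eigenvalue g m (fst p) ^ k / of_nat (fact k)) sums exp (ghat_eigenvalue g m (fst p))"
    for m using exp_converges[of "ghat_eigenvalue g m (fst p)"]
    by (simp add: scaleR_conv_of_real divide_inverse mult.commute)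
  then have "(\<lambda>k. \<Sum>m\<in>M. c m (fst p) * plane_wave m (snd p) *
        (ghat_eigenvalue g m (fst p) ^ k / of_nat (fact k)))
      sums (\<Sum>m\<in>M. c m (fst p) * plane_wave m (snd p) * exp (ghat_eigenvalue g m (fst p)))"
    by (intro sums_sum sums_mult)
  then show ?thesis
    unfolding ghat_power_plane_wave_sum by (simp add: sum_divide_distrib algebra_simps)
qed

lemma echar_sum_eq_plane_wave_sum:
  "(\<lambda>p. \<Sum>m\<in>M. c m * echar r \<nu> lam m p)
     = (\<lambda>p. \<Sum>m\<in>M. (if fst p \<in> interior (polytope r \<nu> lam) then c m else 0) * plane_wave m (snd p))"
  by (auto simp: echar_def plane_wave_def intro!: sum.cong)

lemma sigma_eq_plane_wave:
  "fst p \<in> interior (polytope r \<nu> lam) \<Longrightarrow>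
     sigma r \<nu> lam g m p = exp (ghat_eigenvalue g m (fst p)) * plane_wave m (snd p)"
  by (simp add: sigma_def ghat_eigenvalue_def plane_wave_def exp_add exp_diff exp_minus field_simps)

lemma exp_ghat_series_echar_sum:
  assumes "fst p \<in> interior (polytope r \<nu> lam)"
  shows "(\<lambda>k. (ghat g ^^ k) (\<lambda>p. \<Sum>m\<in>M. c m * echar r \<nu> lam m p) p / of_nat (fact k))
     sums (\<Sum>m\<in>M. c m * sigma r \<nu> lam g m p)"
  using exp_ghat_series_plane_wave_sum[of g
      "\<lambda>m x. if x \<in> interior (polytope r \<nu> lam) then c m else 0" M p] assms
  by (simp add: echar_sum_eq_plane_wave_sum sigma_eq_plane_wave mult.assoc)

lemma exp_ghat_echar_sum:
  "exp_ghat r \<nu> lam g (\<lambda>p. \<Sum>m\<in>M. c m * echar r \<nu> lam m p)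
     = (\<lambda>p. \<Sum>m\<in>M. c m * sigma r \<nu> lam g m p)"
proof
  fix p
  show "exp_ghat r \<nu> lam g (\<lambda>p. \<Sum>m\<in>M. c m * echar r \<nu> lam m p) p
      = (\<Sum>m\<in>M. c m * sigma r \<nu> lam g m p)"
  proof (cases "fst p \<in> interior (polytope r \<nu> lam)")
    case True
    then show ?thesis
      using sums_unique[OF exp_ghat_series_echar_sum[OF True], symmetric] by (simp add: exp_ghat_def)
  qed (simp add: exp_ghat_def sigma_def)
qed

lemma exp_ghat_echar: "exp_ghat r \<nu> lam g (echar r \<nu> lam m) = sigma r \<nu> lam g m"
proof -
  have "echar r \<nu> lam m = (\<lambda>p. \<Sum>m'\<in>{m}. 1 * echar r \<nu> lam m' p)" by simp
  then show ?thesis by (simp only: exp_ghat_echar_sum) simp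
qed

lemma sigma_sum_coeffs_unique:
  assumes "finite M" and "x \<in> interior (polytope r \<nu> lam)"
    and "\<And>\<theta>. (\<Sum>m\<in>M. c m * sigma r \<nu> lam g m (x, \<theta>)) = (\<Sum>m\<in>M. d m * sigma r \<nu> lam g m (x, \<theta>))"
  shows "\<forall>m\<in>M. c m = d m"
proof -
  have "(\<Sum>m\<in>M. (c m - d m) * exp (ghat_eigenvalue g m x) * plane_wave m \<theta>) = 0" for \<theta>
    using assms(2) assms(3)[of \<theta>]
    by (simp add: sigma_eq_plane_wave sum_subtractf algebra_simps)
  from plane_wave_sum_eq_0_imp_coeffs_eq_0[OF assms(1) this] show ?thesis by simp
qed

lemma exp_ghat_linear_on_A_P:
  assumes "F \<in> A_P r \<nu> lam" and "G \<in> A_P r \<nu> lam"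
  shows "exp_ghat r \<nu> lam g (\<lambda>p. a * F p + b * G p)
           = (\<lambda>p. a * exp_ghat r \<nu> lam g F p + b * exp_ghat r \<nu> lam g G p)"
proof -
  let ?L = "lattice_pts r \<nu> lam"
  obtain c d where F: "F = (\<lambda>p. \<Sum>m\<in>?L. c m * echar r \<nu> lam m p)"
    and G: "G = (\<lambda>p. \<Sum>m\<in>?L. d m * echar r \<nu> lam m p)"
    using assms unfolding A_P_def cspan_fun_def by blast
  have combined: "(\<lambda>p. a * F p + b * G p)
      = (\<lambda>p. \<Sum>m\<in>?L. (a * c m + b * d m) * echar r \<nu> lam m p)"
    by (simp add: F G sum_distrib_left sum.distrib algebra_simps)
  show ?thesis
    unfolding combined unfolding F G exp_ghat_echar_sum
    by (simp add: sum_distrib_left sum.distrib algebra_simps)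
qed

lemma exp_ghat_image_A_P: "exp_ghat r \<nu> lam g ` A_P r \<nu> lam = H_Pg r \<nu> lam g"
  unfolding A_P_def H_Pg_def cspan_fun_def image_def
  by (auto simp: exp_ghat_echar_sum)

lemma inj_on_exp_ghat_A_P: "inj_on (exp_ghat r \<nu> lam g) (A_P r \<nu> lam)"
proof
  let ?L = "lattice_pts r \<nu> lam" and ?U = "interior (polytope r \<nu> lam)"
  fix F G
  assume "F \<in> A_P r \<nu> lam" "G \<in> A_P r \<nu> lam" and eq: "exp_ghat r \<nu> lam g F = exp_ghat r \<nu> lam g G"
  then obtain c d where F: "F = (\<lambda>p. \<Sum>m\<in>?L. c m * echar r \<nu> lam m p)"
    and G: "G = (\<lambda>p. \<Sum>m\<in>?L. d m * echar r \<nu> lam m p)"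
    unfolding A_P_def cspan_fun_def by blast
  have "F (x, \<theta>) = G (x, \<theta>)" for x \<theta>
  proof (cases "finite ?L \<and> x \<in> ?U")
    case True
    have "(\<Sum>m\<in>?L. c m * sigma r \<nu> lam g m (x, \<theta>')) = (\<Sum>m\<in>?L. d m * sigma r \<nu> lam g m (x, \<theta>'))"
      for \<theta>' using fun_cong[OF eq, of "(x, \<theta>')"] by (simp add: F G exp_ghat_echar_sum)
    with True have "\<forall>m\<in>?L. c m = d m" by (intro sigma_sum_coeffs_unique) auto
    then show ?thesis by (simp add: F G)
  \<comment> \<open>Otherwise both sides vanish: outside ?U by definition of echar, and for infinite ?L
    because a sum over an infinite set is 0.\<close>
  qed (auto simp: F G echar_def)
  then show "F = G" by auto
qed

theorem mainTheorem7:
  fixes r :: nat and \<nu> :: "nat \<Rightarrow> real^'n" and lam :: "nat \<Rightarrow> real" and g :: "real^'n \<Rightarrow> real"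
  assumes "delzant r \<nu> lam"
    and "\<forall>j<r. lam j - 1/2 \<in> \<int>"
    and "symplectic_potential r \<nu> lam g"
  shows "(\<forall>F\<in>A_P r \<nu> lam. \<forall>p. fst p \<in> interior (polytope r \<nu> lam) \<longrightarrow>
            summable (\<lambda>k. (ghat g ^^ k) F p / of_nat (fact k)))
    \<and> (\<forall>F\<in>A_P r \<nu> lam. \<forall>G\<in>A_P r \<nu> lam. \<forall>a b::complex.
            exp_ghat r \<nu> lam g (\<lambda>p. a * F p + b * G p)
              = (\<lambda>p. a * exp_ghat r \<nu> lam g F p + b * exp_ghat r \<nu> lam g G p))
    \<and> bij_betw (exp_ghat r \<nu> lam g) (A_P r \<nu> lam) (H_Pg r \<nu> lam g)
    \<and> (\<forall>m\<in>lattice_pts r \<nu> lam. exp_ghat r \<nu> lam g (echar r \<nu> lam m) = sigma r \<nu> lam g m)"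
proof (intro conjI)
  show "\<forall>F\<in>A_P r \<nu> lam. \<forall>p. fst p \<in> interior (polytope r \<nu> lam) \<longrightarrow>
          summable (\<lambda>k. (ghat g ^^ k) F p / of_nat (fact k))"
    unfolding A_P_def cspan_fun_def using exp_ghat_series_echar_sum sums_summable by blast
  show "bij_betw (exp_ghat r \<nu> lam g) (A_P r \<nu> lam) (H_Pg r \<nu> lam g)"
    by (simp add: bij_betw_def inj_on_exp_ghat_A_P exp_ghat_image_A_P)
qed (simp_all add: exp_ghat_linear_on_A_P exp_ghat_echar)

end
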